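(* Let $K\subseteq\mathbb{R}^m$ be closed, let $G:\mathbb{R}^n\to\mathbb{R}^m$ be second-order gph-regular at $x^*$, let $\Psi=\{x\in\mathbb{R}^n:G(x)\in K\}$ with $x^*\in\Psi$, and suppose that MSCQ for $\Psi$ holds at $x^*$. If $K$ is outer second-order regular at $G(x^* )$ in direction $G'(x^*;d)$, then $\Psi$ is outer second-order regular at $x^*$ in direction $d$. Furthermore, if $K$ is outer second-order regular at $G(x^* )$ (in every direction), then $\Psi$ is outer second-order regular at $x^*$ (in every direction).
   Context: Definitions. For $g:\mathbb{R}^n\to\mathbb{R}^k$: $g'(x;d)=\lim_{t\downarrow0}(g(x+td)-g(x))/t$; $g$ is second-order directionally differentiable at $x$ if for every $d$, $g'(x;d)$ exists and $g''(x;d,w):=\lim_{t\downarrow0}\frac{g(x+td+\frac12t^2w)-g(x)-tg'(x;d)}{\frac12t^2}$ exists for all $w$. $g$ is second-order gph-regular at $x^*$ if it is locally Lipschitz continuous and second-order directionally differentiable at $x^*$ and for every $d$ and every path $w:\mathbb{R}_+\to\mathbb{R}^n$ with $tw(t)\to0$ as $t\downarrow0$ there is $r$ with $\|r(t)\|/t^2\to0$ such that $g(x^*+td+\frac12t^2w(t))=g(x^* )+tg'(x^*;d)+\frac12t^2g''(x^*;d,w(t))+r(t)$ for $t\ge0$. For a set $C$ and $x^*\in C$: tangent cone $\mathcal{T}_C(x^* )=\{d:\exists t_k\downarrow0,d^k\to d,x^*+t_kd^k\in C\}$; for $d\in\mathcal{T}_C(x^* )$, $\mathcal{T}^2_C(x^*;d)=\{w:\exists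 t_k\downarrow0,w^k\to w,x^*+t_kd+\frac12t_k^2w^k\in C\}$ (outer second-order tangent set). $C$ is outer second-order regular at $x^*$ in direction $d$ if for every sequence $x^k=x^*+t_kd+\frac12t_k^2w^k\in C$ with $t_k\downarrow0$ and $t_kw^k\to0$, $\lim_k\mathrm{dist}(w^k,\mathcal{T}^2_C(x^*;d))=0$. MSCQ for $\Psi$ holds at $x^*$ if there are a neighborhood $U$ of $x^*$ and $\kappa>0$ with $\mathrm{dist}(x,\Psi)\le\kappa\,\mathrm{dist}(G(x),K)$ for all $x\in U$. *)

theory Defs
  imports "HOL-Analysis.Analysis"
begin

definition dir_deriv :: "('a::real_normed_vector \<Rightarrow> 'b::real_normed_vector) \<Rightarrow> 'a \<Rightarrow> 'a \<Rightarrow> 'b" where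
  "dir_deriv g x d = Lim (at_right 0) (\<lambda>t::real. (g (x + t *\<^sub>R d) - g x) /\<^sub>R t)"

definition has_dir_deriv :: "('a::real_normed_vector \<Rightarrow> 'b::real_normed_vector) \<Rightarrow> 'a \<Rightarrow> 'a \<Rightarrow> bool" where
  "has_dir_deriv g x d \<longleftrightarrow> (\<exists>v. ((\<lambda>t::real. (g (x + t *\<^sub>R d) - g x) /\<^sub>R t) \<longlongrightarrow> v) (at_right 0))"

definition so_quot :: "('a::real_normed_vector \<Rightarrow> 'b::real_normed_vector) \<Rightarrow> 'a \<Rightarrow> 'a \<Rightarrow> 'a \<Rightarrow> real \<Rightarrow> 'b" where
  "so_quot g x d w t =
     (g (x + t *\<^sub>R d + ((1/2) * t\<^sup>2) *\<^sub>R w) - g x - t *\<^sub>R dir_deriv g x d) /\<^sub>R ((1/2) * t\<^sup>2)"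

definition dir_deriv2 :: "('a::real_normed_vector \<Rightarrow> 'b::real_normed_vector) \<Rightarrow> 'a \<Rightarrow> 'a \<Rightarrow> 'a \<Rightarrow> 'b" where
  "dir_deriv2 g x d w = Lim (at_right 0) (so_quot g x d w)"

definition so_dir_differentiable :: "('a::real_normed_vector \<Rightarrow> 'b::real_normed_vector) \<Rightarrow> 'a \<Rightarrow> bool" where
  "so_dir_differentiable g x \<longleftrightarrow>
     (\<forall>d. has_dir_deriv g x d \<and> (\<forall>w. \<exists>v. (so_quot g x d w \<longlongrightarrow> v) (at_right 0)))"

definition so_gph_regular :: "('a::real_normed_vector \<Rightarrow> 'b::real_normed_vector) \<Rightarrow> 'a \<Rightarrow> bool" where
  "so_gph_regular g x \<longleftrightarrow>
     (\<exists>U L. open U \<and> x \<in> U \<and> L-lipschitz_on U g) \<and>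
     so_dir_differentiable g x \<and>
     (\<forall>d (w :: real \<Rightarrow> 'a). ((\<lambda>t. t *\<^sub>R w t) \<longlongrightarrow> 0) (at_right 0) \<longrightarrow>
        (\<exists>r :: real \<Rightarrow> 'b. ((\<lambda>t. norm (r t) / t\<^sup>2) \<longlongrightarrow> 0) (at_right 0) \<and>
           (\<forall>t\<ge>0. g (x + t *\<^sub>R d + ((1/2) * t\<^sup>2) *\<^sub>R w t)
                 = g x + t *\<^sub>R dir_deriv g x d + ((1/2) * t\<^sup>2) *\<^sub>R dir_deriv2 g x d (w t) + r t)))"

text \<open>Tangent cone and outer second-order tangent set (t_k decreasing to 0 read as t_k > 0 and t_k tending to 0).\<close>
definition tangent_cone :: "'a::real_normed_vector set \<Rightarrow> 'a \<Rightarrow> 'a set" where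
  "tangent_cone C x = {d. \<exists>t dk. (\<forall>k. t k > 0) \<and> t \<longlonglongrightarrow> 0 \<and> dk \<longlonglongrightarrow> d \<and>
                           (\<forall>k. x + t k *\<^sub>R dk k \<in> C)}"

definition so_tangent_set :: "'a::real_normed_vector set \<Rightarrow> 'a \<Rightarrow> 'a \<Rightarrow> 'a set" where
  "so_tangent_set C x d = {w. \<exists>t wk. (\<forall>k. t k > 0) \<and> t \<longlonglongrightarrow> 0 \<and> wk \<longlonglongrightarrow> w \<and>
                           (\<forall>k. x + t k *\<^sub>R d + ((1/2) * (t k)\<^sup>2) *\<^sub>R wk k \<in> C)}"

text \<open>Outer second-order regularity in direction d. Since dist(w, empty) = +infinity in the paper's
  convention but infdist w {} = 0 in Isabelle, nonemptiness of the tangent set is required explicitly.\<close>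
definition outer_so_regular :: "'a::real_normed_vector set \<Rightarrow> 'a \<Rightarrow> 'a \<Rightarrow> bool" where
  "outer_so_regular C x d \<longleftrightarrow>
     (\<forall>t w. (\<forall>k. t k > 0) \<and> t \<longlonglongrightarrow> 0 \<and> (\<lambda>k. t k *\<^sub>R w k) \<longlonglongrightarrow> 0 \<and>
            (\<forall>k. x + t k *\<^sub>R d + ((1/2) * (t k)\<^sup>2) *\<^sub>R w k \<in> C) \<longrightarrow>
        so_tangent_set C x d \<noteq> {} \<and> (\<lambda>k. infdist (w k) (so_tangent_set C x d)) \<longlonglongrightarrow> 0)"

definition MSCQ :: "('a::real_normed_vector \<Rightarrow> 'b::real_normed_vector) \<Rightarrow> 'b set \<Rightarrow> 'a \<Rightarrow> bool" where
  "MSCQ G K x \<longleftrightarrow> (\<exists>U \<kappa>. open U \<and> x \<in> U \<and> \<kappa> > 0 \<and>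
      (\<forall>y\<in>U. infdist y {z. G z \<in> K} \<le> \<kappa> * infdist (G y) K))"

end

(* Let x_k = x + t_k d + (1/2) t_k^2 w_k lie in Psi. Gph-regularity, applied to a path through
   the w_k (one exists once the t_k are pairwise distinct, which holds along a subsequence), gives
   G x_k = G x + t_k G'(x;d) + (1/2) t_k^2 (G''(x;d,w_k) + o(1)) in K, so outer regularity of K
   drives G''(x;d,w_k) towards the second-order tangent set T_K of K.
   MSCQ transfers this back: if v in T_K is realised along steps s_k, the point
   x + s_k d + (1/2) s_k^2 w is at distance at most kappa (1/2) s_k^2 (|G''(x;d,w) - v| + o(1))
   from Psi, and the rescaled near points of Psi accumulate, by compactness, at an element of the
   second-order tangent set T_Psi of Psi. Hence
   dist(w, T_Psi) <= kappa dist(G''(x;d,w), T_K), and both tangent sets are nonempty. *)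

theory Submission
  imports Defs
begin

lemma infdist_lessE:
  assumes "A \<noteq> {}" "infdist x A < e"
  obtains a where "a \<in> A" "dist x a < e"
  using assms by (auto simp: infdist_notempty cINF_less_iff)

lemma so_quot_expansion:
  assumes "t \<noteq> 0"
  shows "g (x + t *\<^sub>R d + ((1/2) * t\<^sup>2) *\<^sub>R w)
       = g x + t *\<^sub>R dir_deriv g x d + ((1/2) * t\<^sup>2) *\<^sub>R so_quot g x d w t"
  using assms by (simp add: so_quot_def)

lemma so_quot_tendsto_dir_deriv2:
  assumes "so_dir_differentiable g x"
  shows "(so_quot g x d w \<longlongrightarrow> dir_deriv2 g x d w) (at_right 0)"
proof -
  obtain v where "(so_quot g x d w \<longlongrightarrow> v) (at_right 0)"
    using assms unfolding so_dir_differentiable_def by blast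
  moreover from this have "dir_deriv2 g x d w = v"
    unfolding dir_deriv2_def by (rule tendsto_Lim[OF trivial_limit_at_right_real])
  ultimately show ?thesis by simp
qed

lemma so_quot_lipschitz:
  assumes "L-lipschitz_on U g" "open U" "x \<in> U"
  shows "\<forall>\<^sub>F t in at_right 0. dist (so_quot g x d w t) (so_quot g x d w' t) \<le> L * dist w w'"
proof -
  have near: "\<forall>\<^sub>F t in at_right 0. x + t *\<^sub>R d + ((1/2) * t\<^sup>2) *\<^sub>R v \<in> U" for v
  proof -
    have "((\<lambda>t. x + t *\<^sub>R d + ((1/2) * t\<^sup>2) *\<^sub>R v) \<longlongrightarrow> x + 0 *\<^sub>R d + ((1/2) * 0\<^sup>2) *\<^sub>R v) (at_right 0)"
      by (intro tendsto_intros)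
    then show ?thesis using assms(2,3) by (simp add: tendsto_def)
  qed
  show ?thesis
    using near[of w] near[of w'] eventually_at_right_less[of "0::real"]
  proof eventually_elim
    case (elim t)
    define h where "h = (1/2) * t\<^sup>2"
    have "h > 0" using elim(3) by (simp add: h_def)
    have "dist (g (x + t *\<^sub>R d + h *\<^sub>R w)) (g (x + t *\<^sub>R d + h *\<^sub>R w'))
        \<le> L * dist (x + t *\<^sub>R d + h *\<^sub>R w) (x + t *\<^sub>R d + h *\<^sub>R w')"
      using lipschitz_onD[OF assms(1)] elim(1,2) unfolding h_def by blast
    also have "\<dots> = h * (L * dist w w')"
      using \<open>h > 0\<close> by (simp add: dist_norm algebra_simps flip: scaleR_diff_right)
    finally have "dist (g (x + t *\<^sub>R d + h *\<^sub>R w)) (g (x + t *\<^sub>R d + h *\<^sub>R w')) / h \<le> L * dist w w'"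
      using \<open>h > 0\<close> by (simp add: divide_le_eq mult.commute)
    moreover have "so_quot g x d w t - so_quot g x d w' t
        = inverse h *\<^sub>R (g (x + t *\<^sub>R d + h *\<^sub>R w) - g (x + t *\<^sub>R d + h *\<^sub>R w'))"
      unfolding so_quot_def h_def by (simp add: algebra_simps)
    ultimately show ?case
      using \<open>h > 0\<close> by (simp add: dist_norm divide_inverse_commute)
  qed
qed

lemma lipschitz_on_dir_deriv2:
  assumes "L-lipschitz_on U g" "open U" "x \<in> U" "so_dir_differentiable g x"
  shows "L-lipschitz_on UNIV (dir_deriv2 g x d)"
proof (rule lipschitz_onI)
  show "0 \<le> L" using assms(1) by (rule lipschitz_on_nonneg)
  fix w w' :: 'a
  have "((\<lambda>t. dist (so_quot g x d w t) (so_quot g x d w' t))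
      \<longlongrightarrow> dist (dir_deriv2 g x d w) (dir_deriv2 g x d w')) (at_right 0)"
    by (intro tendsto_dist so_quot_tendsto_dir_deriv2 assms(4))
  then show "dist (dir_deriv2 g x d w) (dir_deriv2 g x d w') \<le> L * dist w w'"
    using so_quot_lipschitz[OF assms(1-3)] by (rule tendsto_upperbound) simp
qed

lemma so_gph_regular_lipschitz_dir_deriv2:
  assumes "so_gph_regular g x"
  obtains L where "L-lipschitz_on UNIV (dir_deriv2 g x d)"
  using assms lipschitz_on_dir_deriv2 unfolding so_gph_regular_def by blast

lemma lipschitz_on_tendsto_scaleR_zero:
  fixes f :: "'a::real_normed_vector \<Rightarrow> 'b::real_normed_vector"
  assumes "L-lipschitz_on UNIV f" "s \<longlonglongrightarrow> 0" "(\<lambda>k. s k *\<^sub>R u k) \<longlonglongrightarrow> 0"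
  shows "(\<lambda>k. s k *\<^sub>R f (u k)) \<longlonglongrightarrow> 0"
proof (rule Lim_null_comparison)
  show "\<forall>\<^sub>F k in sequentially. norm (s k *\<^sub>R f (u k)) \<le> \<bar>s k\<bar> * norm (f 0) + L * norm (s k *\<^sub>R u k)"
  proof (intro always_eventually allI)
    fix k
    have "norm (f (u k)) \<le> norm (f 0) + L * norm (u k)"
      using lipschitz_onD[OF assms(1), of "u k" 0] norm_triangle_ineq2[of "f (u k)" "f 0"]
      by (simp add: dist_norm)
    then have "\<bar>s k\<bar> * norm (f (u k)) \<le> \<bar>s k\<bar> * (norm (f 0) + L * norm (u k))"
      by (rule mult_left_mono) simp
    then show "norm (s k *\<^sub>R f (u k)) \<le> \<bar>s k\<bar> * norm (f 0) + L * norm (s k *\<^sub>R u k)"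
      by (simp add: algebra_simps)
  qed
  have "(\<lambda>k. \<bar>s k\<bar> * norm (f 0) + L * norm (s k *\<^sub>R u k)) \<longlonglongrightarrow> \<bar>0\<bar> * norm (f 0) + L * norm (0::'a)"
    by (intro tendsto_intros assms(2,3))
  then show "(\<lambda>k. \<bar>s k\<bar> * norm (f 0) + L * norm (s k *\<^sub>R u k)) \<longlonglongrightarrow> 0"
    by simp
qed

lemma positive_null_seq_inj_subseq:
  fixes t :: "nat \<Rightarrow> real"
  assumes "\<forall>k. t k > 0" "t \<longlonglongrightarrow> 0"
  obtains q :: "nat \<Rightarrow> nat" where "strict_mono q" "inj (t \<circ> q)"
proof -
  have "\<exists>k>m. t k < t m" for m
  proof -
    have "\<forall>\<^sub>F k in sequentially. t k < t m"
      using order_tendstoD(2)[OF assms(2)] assms(1) by blast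
    then obtain N where "\<And>k. k \<ge> N \<Longrightarrow> t k < t m"
      unfolding eventually_sequentially by blast
    then show ?thesis by (intro exI[of _ "max N (Suc m)"]) simp
  qed
  then obtain f where f: "\<And>m. f m > m" "\<And>m. t (f m) < t m" by metis
  define q where "q n = (f ^^ n) 0" for n
  have "strict_mono q" "strict_mono (\<lambda>n. - t (q n))"
    using f by (simp_all add: strict_mono_Suc_iff q_def)
  moreover from this(2) have "inj (\<lambda>n. - t (q n))"
    by (rule strict_mono_imp_inj_on)
  ultimately show ?thesis
    using that[of q] by (auto simp: inj_def)
qed

lemma path_through_seq:
  fixes s :: "nat \<Rightarrow> real" and u :: "nat \<Rightarrow> 'a::real_normed_vector"
  assumes "inj s" "\<forall>k. s k > 0" "(\<lambda>k. s k *\<^sub>R u k) \<longlonglongrightarrow> 0"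
  obtains p where "\<And>k. p (s k) = u k" "((\<lambda>t. t *\<^sub>R p t) \<longlongrightarrow> 0) (at_right 0)"
proof
  define p where "p t = (if t \<in> range s then u (inv s t) else 0)" for t
  show ps: "p (s k) = u k" for k
    using assms(1) by (simp add: p_def)
  show "((\<lambda>t. t *\<^sub>R p t) \<longlongrightarrow> 0) (at_right 0)"
  proof (rule tendstoI)
    fix \<epsilon> :: real assume "\<epsilon> > 0"
    then obtain N where N: "\<And>k. k \<ge> N \<Longrightarrow> norm (s k *\<^sub>R u k) < \<epsilon>"
      using assms(3) unfolding LIMSEQ_iff by auto
    define \<delta> where "\<delta> = Min (insert 1 (s ` {..<N}))"
    have "\<delta> > 0" using assms(2) by (simp add: \<delta>_def)
    moreover have "dist (t *\<^sub>R p t) 0 < \<epsilon>" if "0 < t" "t < \<delta>" for t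
    proof (cases "t \<in> range s")
      case True
      then obtain k where k: "t = s k" by blast
      have "k \<ge> N"
      proof (rule ccontr)
        assume "\<not> k \<ge> N"
        then have "\<delta> \<le> s k" unfolding \<delta>_def by (intro Min_le) auto
        then show False using that k by simp
      qed
      then show ?thesis using N k ps by simp
    next
      case False
      then show ?thesis using \<open>\<epsilon> > 0\<close> by (simp add: p_def)
    qed
    ultimately show "\<forall>\<^sub>F t in at_right 0. dist (t *\<^sub>R p t) 0 < \<epsilon>"
      unfolding eventually_at_right_field by blast
  qed
qed

lemma so_gph_regular_remainder_path:
  assumes "so_gph_regular g x" "((\<lambda>t. t *\<^sub>R w t) \<longlongrightarrow> 0) (at_right 0)"
  shows "((\<lambda>t. so_quot g x d (w t) t - dir_deriv2 g x d (w t)) \<longlongrightarrow> 0) (at_right 0)"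
proof -
  obtain r where r: "((\<lambda>t. norm (r t) / t\<^sup>2) \<longlongrightarrow> 0) (at_right 0)"
    "\<And>t. t \<ge> 0 \<Longrightarrow> g (x + t *\<^sub>R d + ((1/2) * t\<^sup>2) *\<^sub>R w t)
       = g x + t *\<^sub>R dir_deriv g x d + ((1/2) * t\<^sup>2) *\<^sub>R dir_deriv2 g x d (w t) + r t"
    using assms unfolding so_gph_regular_def by blast
  have "((\<lambda>t. 2 * (norm (r t) / t\<^sup>2)) \<longlongrightarrow> 2 * 0) (at_right 0)"
    by (intro tendsto_intros r(1))
  moreover have "\<forall>\<^sub>F t in at_right 0.
      2 * (norm (r t) / t\<^sup>2) = norm (so_quot g x d (w t) t - dir_deriv2 g x d (w t))"
    using eventually_at_right_less
  proof eventually_elim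
    case (elim t)
    have "g (x + t *\<^sub>R d + ((1/2) * t\<^sup>2) *\<^sub>R w t) - g x - t *\<^sub>R dir_deriv g x d
        = ((1/2) * t\<^sup>2) *\<^sub>R dir_deriv2 g x d (w t) + r t"
      using r(2)[of t] elim by simp
    then have "so_quot g x d (w t) t - dir_deriv2 g x d (w t) = inverse ((1/2) * t\<^sup>2) *\<^sub>R r t"
      using elim by (simp add: so_quot_def scaleR_add_right)
    then show ?case by (simp add: field_simps)
  qed
  ultimately have "((\<lambda>t. norm (so_quot g x d (w t) t - dir_deriv2 g x d (w t))) \<longlongrightarrow> 0) (at_right 0)"
    by (simp add: Lim_transform_eventually)
  then show ?thesis by (simp only: tendsto_norm_zero_iff)
qed

lemma so_gph_regular_remainder_inj_seq:
  assumes "so_gph_regular g x" "inj s" "\<forall>k. s k > 0" "s \<longlonglongrightarrow> 0" "(\<lambda>k. s k *\<^sub>R u k) \<longlonglongrightarrow> 0"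
  shows "(\<lambda>k. so_quot g x d (u k) (s k) - dir_deriv2 g x d (u k)) \<longlonglongrightarrow> 0"
proof -
  obtain p where p: "\<And>k. p (s k) = u k" "((\<lambda>t. t *\<^sub>R p t) \<longlongrightarrow> 0) (at_right 0)"
    using path_through_seq assms(2,3,5) by blast
  have "filterlim s (at_right 0) sequentially"
    using assms(3,4) by (intro tendsto_imp_filterlim_at_right) auto
  with so_gph_regular_remainder_path[OF assms(1) p(2)]
  have "(\<lambda>k. so_quot g x d (p (s k)) (s k) - dir_deriv2 g x d (p (s k))) \<longlonglongrightarrow> 0"
    by (rule filterlim_compose)
  then show ?thesis by (simp add: p(1))
qed

lemma so_gph_regular_remainder_seq:
  assumes "so_gph_regular g x" "\<forall>k. s k > 0" "s \<longlonglongrightarrow> 0" "(\<lambda>k. s k *\<^sub>R u k) \<longlonglongrightarrow> 0"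
  shows "(\<lambda>k. so_quot g x d (u k) (s k) - dir_deriv2 g x d (u k)) \<longlonglongrightarrow> 0"
    (is "?E \<longlonglongrightarrow> 0")
proof (rule ccontr)
  assume "\<not> ?E \<longlonglongrightarrow> 0"
  then obtain \<epsilon> where "\<epsilon> > 0" "\<not> (\<forall>\<^sub>F k in sequentially. dist (?E k) 0 < \<epsilon>)"
    by (auto simp: tendsto_iff)
  then obtain r :: "nat \<Rightarrow> nat" where r: "strict_mono r" "\<And>n. \<not> dist (?E (r n)) 0 < \<epsilon>"
    using not_eventually_sequentiallyD by blast
  have "\<forall>k. (s \<circ> r) k > 0" using assms(2) by simp
  moreover have "(s \<circ> r) \<longlonglongrightarrow> 0" using assms(3) r(1) by (rule LIMSEQ_subseq_LIMSEQ)
  ultimately obtain q :: "nat \<Rightarrow> nat" where q: "strict_mono q" "inj (s \<circ> r \<circ> q)"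
    by (rule positive_null_seq_inj_subseq)
  \<comment> \<open>with pairwise distinct step sizes the sequence is a path sampled at the step sizes\<close>
  have rq: "strict_mono (r \<circ> q)" using r(1) q(1) by (rule strict_mono_o)
  have "(\<lambda>n. s ((r \<circ> q) n)) \<longlonglongrightarrow> 0" "(\<lambda>n. s ((r \<circ> q) n) *\<^sub>R u ((r \<circ> q) n)) \<longlonglongrightarrow> 0"
    using LIMSEQ_subseq_LIMSEQ[OF assms(3) rq] LIMSEQ_subseq_LIMSEQ[OF assms(4) rq]
    by (simp_all add: comp_def)
  moreover have "inj (\<lambda>n. s ((r \<circ> q) n))" using q(2) by (simp add: comp_def)
  ultimately have "(\<lambda>n. ?E ((r \<circ> q) n)) \<longlonglongrightarrow> 0"
    using assms(1,2) by (intro so_gph_regular_remainder_inj_seq) auto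
  then have "\<forall>\<^sub>F n in sequentially. dist (?E ((r \<circ> q) n)) 0 < \<epsilon>"
    using \<open>\<epsilon> > 0\<close> by (rule tendstoD)
  then obtain N where "\<And>n. n \<ge> N \<Longrightarrow> dist (?E ((r \<circ> q) n)) 0 < \<epsilon>"
    unfolding eventually_sequentially by blast
  then show False using r(2)[of "q N"] by simp
qed

lemma outer_so_regular_image_seq:
  assumes reg: "so_gph_regular g x" and KR: "outer_so_regular K (g x) (dir_deriv g x d)"
    and s: "\<forall>k. s k > 0" "s \<longlonglongrightarrow> 0" and su: "(\<lambda>k. s k *\<^sub>R u k) \<longlonglongrightarrow> 0"
    and mem: "\<forall>k. g (x + s k *\<^sub>R d + ((1/2) * (s k)\<^sup>2) *\<^sub>R u k) \<in> K"
  shows "so_tangent_set K (g x) (dir_deriv g x d) \<noteq> {} \<and>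
    (\<lambda>k. infdist (dir_deriv2 g x d (u k)) (so_tangent_set K (g x) (dir_deriv g x d))) \<longlonglongrightarrow> 0"
proof -
  define T where "T = so_tangent_set K (g x) (dir_deriv g x d)"
  define z where "z k = so_quot g x d (u k) (s k)" for k
  have z_err: "(\<lambda>k. z k - dir_deriv2 g x d (u k)) \<longlonglongrightarrow> 0"
    unfolding z_def using reg s su by (rule so_gph_regular_remainder_seq)
  have "\<forall>k. g x + s k *\<^sub>R dir_deriv g x d + ((1/2) * (s k)\<^sup>2) *\<^sub>R z k \<in> K"
    using mem s(1) so_quot_expansion[of _ g x d] unfolding z_def by (metis less_irrefl)
  moreover have "(\<lambda>k. s k *\<^sub>R z k) \<longlonglongrightarrow> 0"
  proof -
    obtain L where "L-lipschitz_on UNIV (dir_deriv2 g x d)"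
      using reg by (rule so_gph_regular_lipschitz_dir_deriv2)
    then have "(\<lambda>k. s k *\<^sub>R dir_deriv2 g x d (u k)) \<longlonglongrightarrow> 0"
      using s(2) su by (rule lipschitz_on_tendsto_scaleR_zero)
    moreover have "(\<lambda>k. s k *\<^sub>R (z k - dir_deriv2 g x d (u k))) \<longlonglongrightarrow> 0 *\<^sub>R 0"
      using s(2) z_err by (rule tendsto_scaleR)
    ultimately have "(\<lambda>k. s k *\<^sub>R (z k - dir_deriv2 g x d (u k)) + s k *\<^sub>R dir_deriv2 g x d (u k)) \<longlonglongrightarrow> 0"
      using tendsto_add by fastforce
    then show ?thesis by (simp add: algebra_simps)
  qed
  ultimately have "T \<noteq> {}" and z_near: "(\<lambda>k. infdist (z k) T) \<longlonglongrightarrow> 0"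
    using KR s unfolding outer_so_regular_def T_def by blast+
  moreover have "(\<lambda>k. infdist (dir_deriv2 g x d (u k)) T) \<longlonglongrightarrow> 0"
  proof (rule Lim_null_comparison)
    show "\<forall>\<^sub>F k in sequentially. norm (infdist (dir_deriv2 g x d (u k)) T)
        \<le> infdist (z k) T + norm (z k - dir_deriv2 g x d (u k))"
      using infdist_triangle[of "dir_deriv2 g x d (u _)" T]
      by (intro always_eventually allI) (simp add: infdist_nonneg dist_norm norm_minus_commute)
    show "(\<lambda>k. infdist (z k) T + norm (z k - dir_deriv2 g x d (u k))) \<longlonglongrightarrow> 0"
      using tendsto_add[OF z_near tendsto_norm_zero[OF z_err]] by simp
  qed
  ultimately show ?thesis unfolding T_def by blast
qed

lemma so_tangent_set_near:
  fixes C :: "'a::{real_normed_vector, heine_borel} set"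
  assumes "C \<noteq> {}" "\<forall>k. s k > 0" "s \<longlonglongrightarrow> 0"
    and "\<forall>\<^sub>F k in sequentially.
      infdist (x + s k *\<^sub>R d + ((1/2) * (s k)\<^sup>2) *\<^sub>R w) C < (1/2) * (s k)\<^sup>2 * R"
  shows "\<exists>u\<in>so_tangent_set C x d. dist u w \<le> R"
proof -
  obtain N where N: "\<And>k. k \<ge> N \<Longrightarrow>
      infdist (x + s k *\<^sub>R d + ((1/2) * (s k)\<^sup>2) *\<^sub>R w) C < (1/2) * (s k)\<^sup>2 * R"
    using assms(4) unfolding eventually_sequentially by blast
  define \<sigma> where "\<sigma> k = s (k + N)" for k
  have \<sigma>: "\<forall>k. \<sigma> k > 0" "\<sigma> \<longlonglongrightarrow> 0"
    using assms(2) LIMSEQ_ignore_initial_segment[OF assms(3), of N] by (simp_all add: \<sigma>_def[abs_def])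
  have "\<exists>c\<in>C. dist (x + \<sigma> k *\<^sub>R d + ((1/2) * (\<sigma> k)\<^sup>2) *\<^sub>R w) c < (1/2) * (\<sigma> k)\<^sup>2 * R" for k
    using N[of "k + N"] assms(1) infdist_lessE unfolding \<sigma>_def by (metis le_add2)
  then obtain c where c: "\<And>k. c k \<in> C"
    "\<And>k. dist (x + \<sigma> k *\<^sub>R d + ((1/2) * (\<sigma> k)\<^sup>2) *\<^sub>R w) (c k) < (1/2) * (\<sigma> k)\<^sup>2 * R"
    by metis
  define u where "u k = (2 / (\<sigma> k)\<^sup>2) *\<^sub>R (c k - x - \<sigma> k *\<^sub>R d)" for k
  have u_eq: "x + \<sigma> k *\<^sub>R d + ((1/2) * (\<sigma> k)\<^sup>2) *\<^sub>R u k = c k" for k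
    using \<sigma>(1)[rule_format, of k] by (simp add: u_def algebra_simps)
  have "dist (u k) w < R" for k
  proof -
    have "u k - w = (2 / (\<sigma> k)\<^sup>2) *\<^sub>R (c k - (x + \<sigma> k *\<^sub>R d + ((1/2) * (\<sigma> k)\<^sup>2) *\<^sub>R w))"
      using \<sigma>(1)[rule_format, of k] by (simp add: u_def algebra_simps)
    then have "dist (u k) w = (2 / (\<sigma> k)\<^sup>2) * dist (x + \<sigma> k *\<^sub>R d + ((1/2) * (\<sigma> k)\<^sup>2) *\<^sub>R w) (c k)"
      by (simp add: dist_norm norm_minus_commute)
    also have "\<dots> < (2 / (\<sigma> k)\<^sup>2) * ((1/2) * (\<sigma> k)\<^sup>2 * R)"
      using c(2)[of k] \<sigma>(1)[rule_format, of k] by (intro mult_strict_left_mono) auto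
    also have "\<dots> = R"
      using \<sigma>(1)[rule_format, of k] by simp
    finally show ?thesis .
  qed
  then have "\<forall>k. u k \<in> cball w R" by (simp add: dist_commute less_imp_le)
  then obtain l \<phi> where l: "l \<in> cball w R" "strict_mono \<phi>" "(u \<circ> \<phi>) \<longlonglongrightarrow> l"
    using compact_imp_seq_compact[OF compact_cball] unfolding seq_compact_def by metis
  have "l \<in> so_tangent_set C x d"
    unfolding so_tangent_set_def
  proof (intro CollectI exI conjI allI)
    show "(\<sigma> \<circ> \<phi>) k > 0" for k using \<sigma>(1) by simp
    show "(\<sigma> \<circ> \<phi>) \<longlonglongrightarrow> 0" using \<sigma>(2) l(2) by (rule LIMSEQ_subseq_LIMSEQ)
    show "(u \<circ> \<phi>) \<longlonglongrightarrow> l" by (rule l(3))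
    show "x + (\<sigma> \<circ> \<phi>) k *\<^sub>R d + ((1/2) * ((\<sigma> \<circ> \<phi>) k)\<^sup>2) *\<^sub>R (u \<circ> \<phi>) k \<in> C" for k
      using u_eq c(1) by simp
  qed
  with l(1) show ?thesis by (auto simp: dist_commute)
qed

lemma infdist_preimage_le_so_quot:
  assumes "t \<noteq> 0" "\<kappa> \<ge> 0" "\<forall>y\<in>U. infdist y {z. g z \<in> K} \<le> \<kappa> * infdist (g y) K"
    and "x + t *\<^sub>R d + ((1/2) * t\<^sup>2) *\<^sub>R w \<in> U"
    and "g x + t *\<^sub>R dir_deriv g x d + ((1/2) * t\<^sup>2) *\<^sub>R v \<in> K"
  shows "infdist (x + t *\<^sub>R d + ((1/2) * t\<^sup>2) *\<^sub>R w) {z. g z \<in> K}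
    \<le> \<kappa> * ((1/2) * t\<^sup>2 * dist (so_quot g x d w t) v)"
proof -
  have "dist (g (x + t *\<^sub>R d + ((1/2) * t\<^sup>2) *\<^sub>R w)) (g x + t *\<^sub>R dir_deriv g x d + ((1/2) * t\<^sup>2) *\<^sub>R v)
      = (1/2) * t\<^sup>2 * dist (so_quot g x d w t) v"
    using so_quot_expansion[OF assms(1), of g x d w] by (simp add: dist_norm flip: scaleR_diff_right)
  then have "infdist (g (x + t *\<^sub>R d + ((1/2) * t\<^sup>2) *\<^sub>R w)) K \<le> (1/2) * t\<^sup>2 * dist (so_quot g x d w t) v"
    using infdist_le[OF assms(5)] by metis
  with assms(2-4) show ?thesis by (meson mult_left_mono order_trans)
qed

lemma so_tangent_set_preimage_near:
  fixes g :: "'a::{real_normed_vector, heine_borel} \<Rightarrow> 'b::real_normed_vector"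
  assumes reg: "so_gph_regular g x" and "g x \<in> K"
    and U: "open U" "x \<in> U" "\<kappa> > 0" "\<forall>y\<in>U. infdist y {z. g z \<in> K} \<le> \<kappa> * infdist (g y) K"
    and ne: "so_tangent_set K (g x) (dir_deriv g x d) \<noteq> {}" and "\<epsilon> > 0"
  shows "\<exists>u\<in>so_tangent_set {z. g z \<in> K} x d.
    dist u w \<le> \<kappa> * (infdist (dir_deriv2 g x d w) (so_tangent_set K (g x) (dir_deriv g x d)) + \<epsilon>)"
proof -
  define T where "T = so_tangent_set K (g x) (dir_deriv g x d)"
  define D where "D = infdist (dir_deriv2 g x d w) T"
  obtain v where "v \<in> T" and v: "dist (dir_deriv2 g x d w) v < D + \<epsilon>"
    using infdist_lessE[of T "dir_deriv2 g x d w" "D + \<epsilon>"] ne \<open>\<epsilon> > 0\<close>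
    unfolding T_def D_def by auto
  then obtain s vk where s: "\<forall>k. s k > 0" "s \<longlonglongrightarrow> 0" and vk: "vk \<longlonglongrightarrow> v"
    and vk_K: "\<And>k. g x + s k *\<^sub>R dir_deriv g x d + ((1/2) * (s k)\<^sup>2) *\<^sub>R vk k \<in> K"
    unfolding T_def so_tangent_set_def by blast
  define y where "y k = x + s k *\<^sub>R d + ((1/2) * (s k)\<^sup>2) *\<^sub>R w" for k
  have "filterlim s (at_right 0) sequentially"
    using s by (intro tendsto_imp_filterlim_at_right) auto
  with so_quot_tendsto_dir_deriv2 have "(\<lambda>k. so_quot g x d w (s k)) \<longlonglongrightarrow> dir_deriv2 g x d w"
    using reg unfolding so_gph_regular_def by (blast intro: filterlim_compose)
  then have "(\<lambda>k. dist (so_quot g x d w (s k)) (vk k)) \<longlonglongrightarrow> dist (dir_deriv2 g x d w) v"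
    using vk by (rule tendsto_dist)
  then have close: "\<forall>\<^sub>F k in sequentially. dist (so_quot g x d w (s k)) (vk k) < D + \<epsilon>"
    using v by (rule order_tendstoD(2))
  have "y \<longlonglongrightarrow> x + 0 *\<^sub>R d + ((1/2) * 0\<^sup>2) *\<^sub>R w"
    unfolding y_def[abs_def] using s(2) by (intro tendsto_intros)
  then have "\<forall>\<^sub>F k in sequentially. y k \<in> U"
    using U(1,2) by (simp add: tendsto_def)
  with close have "\<forall>\<^sub>F k in sequentially. infdist (y k) {z. g z \<in> K} < (1/2) * (s k)\<^sup>2 * (\<kappa> * (D + \<epsilon>))"
  proof eventually_elim
    case (elim k)
    have "s k > 0" using s(1) by blast
    then have "infdist (y k) {z. g z \<in> K} \<le> \<kappa> * ((1/2) * (s k)\<^sup>2 * dist (so_quot g x d w (s k)) (vk k))"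
      unfolding y_def using U(3,4) elim(2) vk_K by (intro infdist_preimage_le_so_quot) (auto simp: y_def)
    also have "\<dots> < \<kappa> * ((1/2) * (s k)\<^sup>2 * (D + \<epsilon>))"
      using elim(1) \<open>s k > 0\<close> U(3) by simp
    finally show ?case by (simp add: algebra_simps)
  qed
  then show ?thesis
    unfolding y_def D_def T_def using \<open>g x \<in> K\<close> s by (intro so_tangent_set_near) auto
qed

lemma infdist_so_tangent_set_preimage_le:
  fixes g :: "'a::{real_normed_vector, heine_borel} \<Rightarrow> 'b::real_normed_vector"
  assumes "so_gph_regular g x" and "g x \<in> K"
    and U: "open U" "x \<in> U" "\<kappa> > 0" "\<forall>y\<in>U. infdist y {z. g z \<in> K} \<le> \<kappa> * infdist (g y) K"
    and "so_tangent_set K (g x) (dir_deriv g x d) \<noteq> {}"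
  shows "infdist w (so_tangent_set {z. g z \<in> K} x d)
    \<le> \<kappa> * infdist (dir_deriv2 g x d w) (so_tangent_set K (g x) (dir_deriv g x d))"
proof (rule field_le_epsilon)
  fix \<epsilon> :: real assume "\<epsilon> > 0"
  then obtain u where "u \<in> so_tangent_set {z. g z \<in> K} x d"
    and "dist u w \<le> \<kappa> * (infdist (dir_deriv2 g x d w) (so_tangent_set K (g x) (dir_deriv g x d)) + \<epsilon> / \<kappa>)"
    using so_tangent_set_preimage_near[OF assms, of "\<epsilon> / \<kappa>" w] U(3) by auto
  then show "infdist w (so_tangent_set {z. g z \<in> K} x d)
    \<le> \<kappa> * infdist (dir_deriv2 g x d w) (so_tangent_set K (g x) (dir_deriv g x d)) + \<epsilon>"
    using infdist_le2[of u _ w] U(3) by (simp add: dist_commute distrib_left)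
qed

lemma outer_so_regular_preimage:
  fixes g :: "'a::{real_normed_vector, heine_borel} \<Rightarrow> 'b::real_normed_vector"
  assumes reg: "so_gph_regular g x" and "g x \<in> K"
    and "open U" "x \<in> U" "\<kappa> > 0" "\<forall>y\<in>U. infdist y {z. g z \<in> K} \<le> \<kappa> * infdist (g y) K"
    and KR: "outer_so_regular K (g x) (dir_deriv g x d)"
  shows "outer_so_regular {z. g z \<in> K} x d"
  unfolding outer_so_regular_def
proof (intro allI impI conjI)
  fix t :: "nat \<Rightarrow> real" and w
  assume "(\<forall>k. t k > 0) \<and> t \<longlonglongrightarrow> 0 \<and> (\<lambda>k. t k *\<^sub>R w k) \<longlonglongrightarrow> 0 \<and>
    (\<forall>k. x + t k *\<^sub>R d + ((1/2) * (t k)\<^sup>2) *\<^sub>R w k \<in> {z. g z \<in> K})"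
  then have ne: "so_tangent_set K (g x) (dir_deriv g x d) \<noteq> {}"
    and lim: "(\<lambda>k. infdist (dir_deriv2 g x d (w k)) (so_tangent_set K (g x) (dir_deriv g x d))) \<longlonglongrightarrow> 0"
    using outer_so_regular_image_seq[OF reg KR] by auto
  show "so_tangent_set {z. g z \<in> K} x d \<noteq> {}"
    using so_tangent_set_preimage_near[OF assms(1-6) ne zero_less_one] by blast
  show "(\<lambda>k. infdist (w k) (so_tangent_set {z. g z \<in> K} x d)) \<longlonglongrightarrow> 0"
  proof (rule Lim_null_comparison)
    show "\<forall>\<^sub>F k in sequentially. norm (infdist (w k) (so_tangent_set {z. g z \<in> K} x d))
        \<le> \<kappa> * infdist (dir_deriv2 g x d (w k)) (so_tangent_set K (g x) (dir_deriv g x d))"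
      using infdist_so_tangent_set_preimage_le[OF assms(1-6) ne] by (simp add: infdist_nonneg)
    show "(\<lambda>k. \<kappa> * infdist (dir_deriv2 g x d (w k)) (so_tangent_set K (g x) (dir_deriv g x d))) \<longlonglongrightarrow> 0"
      using tendsto_mult_right_zero[OF lim] .
  qed
qed

theorem proposition3p3:
  fixes G :: "'n::euclidean_space \<Rightarrow> 'm::euclidean_space"
    and K :: "'m set" and xs :: 'n
  assumes "closed K"
    and "so_gph_regular G xs"
    and "G xs \<in> K"
    and "MSCQ G K xs"
  shows "(\<forall>d. outer_so_regular K (G xs) (dir_deriv G xs d) \<longrightarrow>
              outer_so_regular {x. G x \<in> K} xs d)
       \<and> ((\<forall>v. outer_so_regular K (G xs) v) \<longrightarrow> (\<forall>d. outer_so_regular {x. G x \<in> K} xs d))"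
proof -
  obtain U \<kappa> where "open U" "xs \<in> U" "\<kappa> > 0"
    "\<forall>y\<in>U. infdist y {z. G z \<in> K} \<le> \<kappa> * infdist (G y) K"
    using assms(4) unfolding MSCQ_def by blast
  then have "\<forall>d. outer_so_regular K (G xs) (dir_deriv G xs d) \<longrightarrow> outer_so_regular {x. G x \<in> K} xs d"
    using outer_so_regular_preimage[OF assms(2,3)] by blast
  then show ?thesis by blast
qed

end
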